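(* Let $t_1,\dots,t_N\in\mathbb{C}$ be pairwise distinct, let $B_1,\dots,B_N$ be constant complex $M\times M$ matrices, and let $y$ be a $\mathbb{C}^M$-valued function satisfying $D_xy=\sum_{i=1}^N\frac{B_i}{x-t_i}\,y$. Put $Y_0={}^{\mathrm T}\!\left[\frac{y}{x-t_1},\dots,\frac{y}{x-t_N}\right]\in\mathbb{C}^{MN}$. Then $Y_0$ satisfies the $q$-Okubo type system $$\Big(xI-\tfrac{1}{q}S\Big)D_xY_0=\tfrac1q(B-I)Y_0,$$ where $S=\mathrm{diag}(t_1I_M,\dots,t_NI_M)$ (block diagonal, $MN\times MN$) and $B$ is the $MN\times MN$ block matrix all of whose $N$ block rows equal $[B_1\ B_2\ \cdots\ B_N]$.
   Context: Fix $q\in\mathbb{C}$ with $0<|q|<1$. $D_xf(x)=\frac{f(x)-f(qx)}{(1-q)x}$, applied componentwise to vector-valued functions. $I$ denotes the identity matrix of the appropriate size. *)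

theory Defs
  imports "HOL-Analysis.Analysis"
begin

definition qD :: "complex \<Rightarrow> (complex \<Rightarrow> complex ^ 'k) \<Rightarrow> complex \<Rightarrow> complex ^ 'k" where
  "qD q f x = (\<chi> j. (f x $ j - f (q * x) $ j) / ((1 - q) * x))"

text \<open>C^{MN} is indexed by pairs (i,k): block i (1..N), component k (1..M).\<close>
definition Y0 :: "('n::finite \<Rightarrow> complex) \<Rightarrow> (complex \<Rightarrow> complex ^ 'm::finite) \<Rightarrow> complex \<Rightarrow> complex ^ ('n \<times> 'm)" where
  "Y0 t y x = (\<chi> p. y x $ snd p / (x - t (fst p)))"

definition Smat :: "('n::finite \<Rightarrow> complex) \<Rightarrow> complex ^ ('n \<times> 'm::finite) ^ ('n \<times> 'm)" where
  "Smat t = (\<chi> r c. if r = c then t (fst r) else 0)"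

text \<open>B: every block row equals [B_1 ... B_N], i.e. block (i,j) is B_j.\<close>
definition Bmat :: "('n::finite \<Rightarrow> complex ^ 'm::finite ^ 'm) \<Rightarrow> complex ^ ('n \<times> 'm) ^ ('n \<times> 'm)" where
  "Bmat B = (\<chi> r c. B (fst c) $ snd r $ snd c)"

end

theory Submission
  imports Defs
begin

text \<open>Componentwise, the system reduces to a q-analogue of the quotient rule: for
  g(x) = f(x)/(x - c) one has (q x - c) D g = D f - g.  Applied to the block
  component y_k/(x - t_i) of Y_0, the left-hand side is q times the (i,k) entry of
  (x I - S/q) D Y_0, while D y_k is by hypothesis the k-th entry of any block row
  of B Y_0.\<close>

lemma q_quotient_rule:
  fixes a b c q x :: "'a::field"
  assumes "x \<noteq> 0" "q \<noteq> 1" "x \<noteq> c" "q * x \<noteq> c"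
  shows "(q * x - c) * ((a / (x - c) - b / (q * x - c)) / ((1 - q) * x))
           = (a - b) / ((1 - q) * x) - a / (x - c)"
proof -
  have "1 - q \<noteq> 0" "x - c \<noteq> 0" "q * x - c \<noteq> 0"
    using assms by auto
  with \<open>x \<noteq> 0\<close> show ?thesis
    by (simp add: divide_simps) algebra
qed

lemma qD_Y0_component:
  assumes "x \<noteq> 0" "q \<noteq> 1" "x \<noteq> t i" "q * x \<noteq> t i"
  shows "(q * x - t i) * qD q (Y0 t y) x $ (i, k) = qD q y x $ k - Y0 t y x $ (i, k)"
  using q_quotient_rule[OF assms] by (simp add: qD_def Y0_def)

lemma matrix_vector_mult_mat: "mat c *v v = c *s (v :: 'a::comm_semiring_1 ^ 'n)"
  by (simp add: vec_eq_iff matrix_vector_mult_def mat_def if_distrib if_distribR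
      cong del: if_weak_cong)

lemma Smat_mult_component: "(Smat t *v v) $ p = t (fst p) * v $ p"
  by (simp add: matrix_vector_mult_def Smat_def if_distrib if_distribR cong del: if_weak_cong)

lemma Okubo_matrix_mult_component:
  fixes v :: "complex ^ ('n::finite \<times> 'm::finite)"
  shows "((mat x - mat c ** Smat t) *v v) $ p = (x - c * t (fst p)) * v $ p"
  by (simp add: matrix_vector_mult_diff_rdistrib matrix_vector_mul_assoc[symmetric]
      matrix_vector_mult_mat Smat_mult_component algebra_simps)

lemma Bmat_mult_component:
  "(Bmat B *v v) $ p = (\<Sum>j\<in>UNIV. B j *v (\<chi> l. v $ (j, l))) $ snd p"
proof -
  have "(Bmat B *v v) $ p = (\<Sum>c\<in>UNIV. B (fst c) $ snd p $ snd c * v $ c)"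
    by (simp add: matrix_vector_mult_def Bmat_def)
  also have "\<dots> = (\<Sum>j\<in>UNIV. \<Sum>l\<in>UNIV. B j $ snd p $ l * v $ (j, l))"
    by (simp only: sum.cartesian_product UNIV_Times_UNIV split_def prod.collapse)
  also have "\<dots> = (\<Sum>j\<in>UNIV. B j *v (\<chi> l. v $ (j, l))) $ snd p"
    by (simp add: matrix_vector_mult_def sum_component)
  finally show ?thesis .
qed

lemma Y0_block: "(\<chi> l. Y0 t y x $ (j, l)) = (1 / (x - t j)) *s y x"
  by (simp add: vec_eq_iff Y0_def)

lemma Bmat_mult_Y0_component:
  "(Bmat B *v Y0 t y x) $ p = (\<Sum>j\<in>UNIV. (1 / (x - t j)) *s (B j *v y x)) $ snd p"
  by (simp add: Bmat_mult_component Y0_block vector_scalar_commute)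

theorem mainTheorem2:
  fixes q :: complex
    and t :: "'n::finite \<Rightarrow> complex"
    and B :: "'n \<Rightarrow> complex ^ 'm::finite ^ 'm"
    and y :: "complex \<Rightarrow> complex ^ 'm"
  assumes q: "0 < cmod q" "cmod q < 1"
    and distinct: "inj t"
    and eq: "\<And>x. x \<noteq> 0 \<Longrightarrow> (\<forall>i. x \<noteq> t i \<and> q * x \<noteq> t i) \<Longrightarrow>
               qD q y x = (\<Sum>i\<in>UNIV. (1 / (x - t i)) *s (B i *v y x))"
  shows "\<And>x. x \<noteq> 0 \<Longrightarrow> (\<forall>i. x \<noteq> t i \<and> q * x \<noteq> t i) \<Longrightarrow>
           (mat x - mat (1 / q) ** Smat t) *v qD q (Y0 t y) x
             = (1 / q) *s ((Bmat B - mat 1) *v Y0 t y x)"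
proof -
  fix x assume x0: "x \<noteq> 0" and xt: "\<forall>i. x \<noteq> t i \<and> q * x \<noteq> t i"
  have "q \<noteq> 0" "q \<noteq> 1" using q by auto
  have "((mat x - mat (1 / q) ** Smat t) *v qD q (Y0 t y) x) $ (i, k)
          = ((1 / q) *s ((Bmat B - mat 1) *v Y0 t y x)) $ (i, k)" for i k
  proof -
    have "((mat x - mat (1 / q) ** Smat t) *v qD q (Y0 t y) x) $ (i, k)
            = (1 / q) * ((q * x - t i) * qD q (Y0 t y) x $ (i, k))"
      using \<open>q \<noteq> 0\<close> by (simp add: Okubo_matrix_mult_component field_simps)
    also have "\<dots> = (1 / q) * (qD q y x $ k - Y0 t y x $ (i, k))"
      using qD_Y0_component \<open>q \<noteq> 1\<close> x0 xt by metis
    also have "\<dots> = ((1 / q) *s ((Bmat B - mat 1) *v Y0 t y x)) $ (i, k)"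
      by (simp add: matrix_vector_mult_diff_rdistrib Bmat_mult_Y0_component eq[OF x0 xt]
          diff_divide_distrib)
    finally show ?thesis .
  qed
  then show "(mat x - mat (1 / q) ** Smat t) *v qD q (Y0 t y) x
               = (1 / q) *s ((Bmat B - mat 1) *v Y0 t y x)"
    by (simp add: vec_eq_iff)
qed

end
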